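(* Let $\Gamma$ be a distance-regular graph with $n$ vertices, valency $k\geq 3$, diameter $D\geq 2$, $a_1\neq 0$ and distinct eigenvalues $\theta_0>\theta_1>\cdots>\theta_D=-\frac{k}{a_1+1}$. Then $\theta_1\geq \frac{k-(a_1+1)(a_1+2)}{(a_1+1)^2}$, and equality holds if and only if $E_D$ is a light tail with associated minimal idempotent $E_1$.
   Context: A connected graph $\Gamma$ of diameter $D$ is distance-regular if there are integers $b_i,c_i$ ($0\le i\le D$) such that for any vertices $x,y$ at distance $i$, $y$ has exactly $c_i$ neighbours at distance $i-1$ from $x$ and $b_i$ neighbours at distance $i+1$ from $x$; $k=b_0$ and $a_i=k-b_i-c_i$. The eigenvalues are those of the adjacency matrix; $E_i$ denotes the orthogonal projection onto the $\theta_i$-eigenspace (minimal idempotent), with $E_0=\frac1n J$. A minimal idempotent $E$ is a light tail if $E\circ E=aE_0+bF$ (entrywise product) for some minimal idempotent $F\neq E_0$ and nonzero reals $a,b$; $F$ is the associated minimal idempotent. *)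

theory Defs
  imports "HOL-Analysis.Analysis"
begin

definition simple_graph :: "('n \<Rightarrow> 'n \<Rightarrow> bool) \<Rightarrow> bool" where
  "simple_graph E \<longleftrightarrow> (\<forall>x y. E x y \<longrightarrow> E y x) \<and> (\<forall>x. \<not> E x x)"

fun walk :: "('n \<Rightarrow> 'n \<Rightarrow> bool) \<Rightarrow> nat \<Rightarrow> 'n \<Rightarrow> 'n \<Rightarrow> bool" where
  "walk E 0 x y = (x = y)"
| "walk E (Suc m) x y = (\<exists>z. E x z \<and> walk E m z y)"

definition connected_graph :: "('n \<Rightarrow> 'n \<Rightarrow> bool) \<Rightarrow> bool" where
  "connected_graph E \<longleftrightarrow> (\<forall>x y. \<exists>m. walk E m x y)"

text \<open>Path-length distance (meaningful for connected graphs).\<close>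
definition gdist :: "('n \<Rightarrow> 'n \<Rightarrow> bool) \<Rightarrow> 'n \<Rightarrow> 'n \<Rightarrow> nat" where
  "gdist E x y = (LEAST m. walk E m x y)"

definition diameter_is :: "('n \<Rightarrow> 'n \<Rightarrow> bool) \<Rightarrow> nat \<Rightarrow> bool" where
  "diameter_is E D \<longleftrightarrow> (\<forall>x y. gdist E x y \<le> D) \<and> (\<exists>x y. gdist E x y = D)"

definition distance_regular ::
  "('n \<Rightarrow> 'n \<Rightarrow> bool) \<Rightarrow> nat \<Rightarrow> (nat \<Rightarrow> nat) \<Rightarrow> (nat \<Rightarrow> nat) \<Rightarrow> bool" where
  "distance_regular E D b c \<longleftrightarrow>
     simple_graph E \<and> connected_graph E \<and> diameter_is E D \<and>
     (\<forall>i \<le> D. \<forall>x y. gdist E x y = i \<longrightarrow>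
        card {z. E y z \<and> gdist E x z + 1 = i} = c i \<and>
        card {z. E y z \<and> gdist E x z = i + 1} = b i)"

definition adj_matrix :: "('n::finite \<Rightarrow> 'n \<Rightarrow> bool) \<Rightarrow> real^'n^'n" where
  "adj_matrix E = (\<chi> x y. if E x y then 1 else 0)"

definition eigenvalues :: "real^'n::finite^'n \<Rightarrow> real set" where
  "eigenvalues A = {\<theta>. \<exists>v. v \<noteq> 0 \<and> A *v v = \<theta> *\<^sub>R v}"

definition eigenspace :: "real^'n::finite^'n \<Rightarrow> real \<Rightarrow> (real^'n) set" where
  "eigenspace A \<theta> = {v. A *v v = \<theta> *\<^sub>R v}"

text \<open>Minimal idempotent: matrix of the orthogonal projection onto the eigenspace.\<close>
definition min_idem :: "real^'n::finite^'n \<Rightarrow> real \<Rightarrow> real^'n^'n" where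
  "min_idem A \<theta> = matrix (closest_point (eigenspace A \<theta>))"

definition hadamard :: "real^'n::finite^'n \<Rightarrow> real^'n^'n \<Rightarrow> real^'n^'n" where
  "hadamard M N = (\<chi> i j. M $ i $ j * N $ i $ j)"

text \<open>E is a light tail with associated minimal idempotent F (E0 = J/n).\<close>
definition light_tail_with :: "real^'n::finite^'n \<Rightarrow> real^'n^'n \<Rightarrow> real^'n^'n \<Rightarrow> bool" where
  "light_tail_with E0 E F \<longleftrightarrow> F \<noteq> E0 \<and>
     (\<exists>a b. a \<noteq> 0 \<and> b \<noteq> 0 \<and> hadamard E E = a *\<^sub>R E0 + b *\<^sub>R F)"

end

theory Submission
  imports Defs
begin

text \<open>Write \<open>t = a\<^sub>1 + 1\<close>. Since \<open>E\<^sub>D\<close> is a polynomial in \<open>A\<close>, its entries depend only on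
  the distance, \<open>(E\<^sub>D)\<^sub>x\<^sub>y = u(d(x,y))\<close>, and \<open>A E\<^sub>D = \<theta>\<^sub>D E\<^sub>D\<close> with \<open>\<theta>\<^sub>D = -k/t\<close> forces
  \<open>u\<^sub>1 = -u\<^sub>0/t\<close> and \<open>u\<^sub>2 = u\<^sub>0/t\<^sup>2\<close>. Let \<open>Q = (A - \<theta>\<^sub>1 I)(A - k I)\<close>, which is positive
  semidefinite, and \<open>M = E\<^sub>D \<circ> E\<^sub>D\<close>, which is the Gram matrix of the entrywise products
  of rows of \<open>E\<^sub>D\<close>. Then \<open>S = \<langle>Q, M\<rangle> \<ge> 0\<close>, while computing \<open>S = tr(Q M)\<close> through the
  intersection numbers gives \<open>S = C (\<theta>\<^sub>1 t\<^sup>2 - k + t(t + 1))\<close> with \<open>C > 0\<close>; this is the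
  bound. Equality \<open>S = 0\<close> means that \<open>M\<close> has no component in the eigenspaces beyond the
  first two; as \<open>M\<close> is again a function of the distance, it acts as a scalar on every
  eigenspace, so \<open>M = \<alpha> E\<^sub>0 + \<beta> E\<^sub>1\<close>, and \<open>\<beta> \<noteq> 0\<close> because \<open>u\<^sub>1\<^sup>2 \<noteq> u\<^sub>0\<^sup>2\<close>.
  Conversely \<open>Q\<close> annihilates \<open>E\<^sub>0\<close> and \<open>E\<^sub>1\<close>.\<close>

section \<open>Orthogonal projections onto subspaces\<close>

lemma closest_point_in_subspace:
  fixes S :: "'a::euclidean_space set"
  assumes "subspace S"
  shows "closest_point S a \<in> S"
  using closest_point_in_set[OF closed_subspace[OF assms]] subspace_0[OF assms] by blast

lemma closest_point_subspace_orthogonal: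
  fixes S :: "'a::euclidean_space set"
  assumes S: "subspace S" and x: "x \<in> S"
  shows "inner (a - closest_point S a) x = 0"
proof -
  let ?p = "closest_point S a"
  have p: "?p \<in> S" using S by (rule closest_point_in_subspace)
  have "inner (a - ?p) ((?p + t *\<^sub>R x) - ?p) \<le> 0" for t
    using S p x by (intro closest_point_dot subspace_imp_convex closed_subspace)
      (simp_all add: subspace_add subspace_scale)
  from this[of 1] this[of "-1"] show ?thesis by simp
qed

lemma closest_point_subspace_eqI:
  fixes S :: "'a::euclidean_space set"
  assumes S: "subspace S" and y: "y \<in> S" and orth: "\<And>x. x \<in> S \<Longrightarrow> inner (a - y) x = 0"
  shows "closest_point S a = y"
proof -
  have "dist a y \<le> dist a z" if z: "z \<in> S" for z
  proof -
    have "y - z \<in> S" using S y z by (rule subspace_diff)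
    then have "orthogonal (a - y) (y - z)" using orth by (simp add: orthogonal_def)
    then have "norm (a - z)^2 = norm (a - y)^2 + norm (y - z)^2"
      using norm_add_Pythagorean[of "a - y" "y - z"] by simp
    then show ?thesis by (simp add: dist_norm power2_le_imp_le)
  qed
  then show ?thesis
    using closest_point_unique[OF subspace_imp_convex[OF S] closed_subspace[OF S] y] by simp
qed

lemma linear_closest_point_subspace:
  fixes S :: "'a::euclidean_space set"
  assumes S: "subspace S"
  shows "linear (closest_point S)"
proof (rule linearI)
  note P_in = closest_point_in_subspace[OF S] and orth = closest_point_subspace_orthogonal[OF S]
  fix u v :: 'a and r :: real
  have "inner (u + v - (closest_point S u + closest_point S v)) x = 0" if "x \<in> S" for x
    using orth[OF that, of u] orth[OF that, of v]
    by (simp add: inner_diff_left inner_add_left)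
  then show "closest_point S (u + v) = closest_point S u + closest_point S v"
    using S P_in by (intro closest_point_subspace_eqI) (auto intro: subspace_add)
  have "inner (r *\<^sub>R u - r *\<^sub>R closest_point S u) x = 0" if "x \<in> S" for x
    using orth[OF that, of u] by (simp add: inner_diff_left)
  then show "closest_point S (r *\<^sub>R u) = r *\<^sub>R closest_point S u"
    using S P_in by (intro closest_point_subspace_eqI) (auto intro: subspace_scale)
qed

lemma inner_closest_point_subspace:
  fixes S :: "'a::euclidean_space set"
  assumes S: "subspace S"
  shows "inner w (closest_point S v) = inner (closest_point S w) (closest_point S v)"
  using closest_point_subspace_orthogonal[OF S closest_point_in_subspace[OF S]]
  by (simp add: inner_diff_left)

section \<open>Symmetric matrices\<close>

lemma inner_matrix_vector_symmetric:
  fixes A :: "real^'n::finite^'n"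
  assumes "transpose A = A"
  shows "inner (A *v u) v = inner u (A *v v)"
  by (metis assms dot_lmul_matrix vector_transpose_matrix)

lemma subspace_eigenspace: "subspace (eigenspace A l)"
  unfolding subspace_def eigenspace_def
  by (simp add: matrix_vector_right_distrib matrix_vector_mult_scaleR scaleR_add_right)

lemma eigenspace_orthogonal:
  fixes A :: "real^'n::finite^'n"
  assumes sym: "transpose A = A" and u: "u \<in> eigenspace A l" and v: "v \<in> eigenspace A m"
    and "l \<noteq> m"
  shows "inner u v = 0"
proof -
  have "l * inner u v = inner (A *v u) v" using u by (simp add: eigenspace_def)
  also have "\<dots> = inner u (A *v v)" using sym by (rule inner_matrix_vector_symmetric)
  also have "\<dots> = m * inner u v" using v by (simp add: eigenspace_def)
  finally show ?thesis using \<open>l \<noteq> m\<close> by simp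
qed

lemma nonpos_if_le_pos_multiples:
  fixes a C :: real
  assumes "\<And>t. t > 0 \<Longrightarrow> a \<le> t * C"
  shows "a \<le> 0"
proof (rule ccontr)
  assume "\<not> a \<le> 0"
  define t where "t = a / (2 * (\<bar>C\<bar> + 1))"
  have "t > 0" using \<open>\<not> a \<le> 0\<close> by (simp add: t_def)
  then have "t * C \<le> t * \<bar>C\<bar>" by (simp add: mult_left_mono)
  also have "\<dots> \<le> t * (\<bar>C\<bar> + 1)" using \<open>t > 0\<close> by simp
  also have "\<dots> = a / 2"
    using abs_ge_zero[of C] by (simp add: t_def field_simps)
  finally have "t * C < a" using \<open>\<not> a \<le> 0\<close> by linarith
  then show False using assms[OF \<open>t > 0\<close>] by linarith
qed

lemma rayleigh_maximizer_eigenvector: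
  fixes A :: "real^'n::finite^'n"
  assumes sym: "transpose A = A" and W: "subspace W" and inv: "\<And>w. w \<in> W \<Longrightarrow> A *v w \<in> W"
    and q: "q \<in> W" "inner q q = 1"
    and max: "\<And>u. u \<in> W \<Longrightarrow> inner u (A *v u) \<le> inner q (A *v q) * inner u u"
  shows "A *v q = inner q (A *v q) *\<^sub>R q"
proof -
  define l where "l = inner q (A *v q)"
  define r where "r = A *v q - l *\<^sub>R q"
  have r: "r \<in> W" unfolding r_def using W inv q by (simp add: subspace_diff subspace_scale)
  have rq: "inner r q = 0" "inner q r = 0"
    using q by (simp_all add: r_def l_def inner_diff_left inner_diff_right inner_commute)
  have qAr: "inner q (A *v r) = inner r r"
    using inner_matrix_vector_symmetric[OF sym, of q r] rq
    by (simp add: r_def inner_diff_left inner_commute)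
  have rAq: "inner r (A *v q) = inner r r"
    using rq by (simp add: r_def inner_diff_right inner_diff_left algebra_simps)
  have "2 * inner r r \<le> t * (l * inner r r - inner r (A *v r))" if "t > 0" for t
  proof -
    have "q + t *\<^sub>R r \<in> W" using W q r by (simp add: subspace_add subspace_scale)
    from max[OF this] have "l + 2 * t * inner r r + t\<^sup>2 * inner r (A *v r) \<le> l * (1 + t\<^sup>2 * inner r r)"
      using q(2) rq qAr rAq
      by (simp add: l_def matrix_vector_right_distrib matrix_vector_mult_scaleR inner_add_left
          inner_add_right power2_eq_square algebra_simps)
    then have "t * (2 * inner r r) \<le> t * (t * (l * inner r r - inner r (A *v r)))"
      by (simp add: power2_eq_square algebra_simps)
    then show ?thesis using \<open>t > 0\<close> by simp
  qed
  then have "inner r r \<le> 0" using nonpos_if_le_pos_multiples[of "2 * inner r r"] by force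
  then have "r = 0" by (metis inner_eq_zero_iff inner_ge_zero order_antisym)
  then show ?thesis by (simp add: r_def l_def)
qed

lemma symmetric_matrix_invariant_subspace_eigenvector:
  fixes A :: "real^'n::finite^'n"
  assumes sym: "transpose A = A" and W: "subspace W" and inv: "\<And>w. w \<in> W \<Longrightarrow> A *v w \<in> W"
    and w: "w \<in> W" "w \<noteq> 0"
  obtains q l where "q \<in> W" "q \<noteq> 0" "A *v q = l *\<^sub>R q"
proof -
  define K where "K = sphere 0 1 \<inter> W"
  have "compact K"
    unfolding K_def by (rule compact_Int_closed[OF compact_sphere closed_subspace[OF W]])
  moreover have "(1 / norm w) *\<^sub>R w \<in> K"
    unfolding K_def using w W by (simp add: subspace_scale)
  then have "K \<noteq> {}" by blast
  moreover have "continuous_on K (\<lambda>u. inner u (A *v u))" by (intro continuous_intros)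
  ultimately obtain q where q: "q \<in> K" and qmax: "\<And>u. u \<in> K \<Longrightarrow> inner u (A *v u) \<le> inner q (A *v q)"
    by (metis continuous_attains_sup)
  have qW: "q \<in> W" and qq: "inner q q = 1"
    using q by (auto simp: K_def dot_square_norm)
  have "inner u (A *v u) \<le> inner q (A *v q) * inner u u" if u: "u \<in> W" for u
  proof (cases "u = 0")
    case False
    then have nu: "norm u > 0" by simp
    have "(1 / norm u) *\<^sub>R u \<in> K" unfolding K_def using u False W by (simp add: subspace_scale)
    from qmax[OF this] have "inner u (A *v u) / (norm u)\<^sup>2 \<le> inner q (A *v q)"
      by (simp add: matrix_vector_mult_scaleR power2_eq_square)
    then have "inner u (A *v u) \<le> inner q (A *v q) * (norm u)\<^sup>2"
      using nu by (simp add: pos_divide_le_eq)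
    then show ?thesis by (simp add: dot_square_norm)
  qed simp
  from rayleigh_maximizer_eigenvector[OF sym W inv qW qq this] have "A *v q = inner q (A *v q) *\<^sub>R q" .
  moreover have "q \<noteq> 0" using qq by auto
  ultimately show thesis using that qW by blast
qed

lemma symmetric_matrix_sum_eigenprojections:
  fixes A :: "real^'n::finite^'n"
  assumes sym: "transpose A = A" and fin: "finite (eigenvalues A)"
  shows "(\<Sum>l\<in>eigenvalues A. closest_point (eigenspace A l) v) = v"
proof (rule ccontr)
  let ?P = "\<lambda>l. closest_point (eigenspace A l)"
  define W where "W = {w. \<forall>l\<in>eigenvalues A. \<forall>e\<in>eigenspace A l. inner w e = 0}"
  have W: "subspace W" unfolding subspace_def W_def by (simp add: inner_add_left)
  have inv: "A *v w \<in> W" if "w \<in> W" for w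
    using that inner_matrix_vector_symmetric[OF sym, of w]
    by (simp add: W_def eigenspace_def)
  have "v - (\<Sum>l\<in>eigenvalues A. ?P l v) \<in> W"
    unfolding W_def
  proof (intro CollectI ballI)
    fix l0 e assume l0: "l0 \<in> eigenvalues A" and e: "e \<in> eigenspace A l0"
    have "(\<Sum>l\<in>eigenvalues A. inner (?P l v) e) = (\<Sum>l\<in>{l0}. inner (?P l v) e)"
      using l0 eigenspace_orthogonal[OF sym closest_point_in_subspace[OF subspace_eigenspace] e]
      by (intro sum.mono_neutral_right[OF fin]) auto
    also have "\<dots> = inner v e"
      using closest_point_subspace_orthogonal[OF subspace_eigenspace e, of v]
      by (simp add: inner_diff_left)
    finally show "inner (v - (\<Sum>l\<in>eigenvalues A. ?P l v)) e = 0"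
      by (simp add: inner_diff_left inner_sum_left)
  qed
  moreover assume "(\<Sum>l\<in>eigenvalues A. ?P l v) \<noteq> v"
  ultimately obtain q l where q: "q \<in> W" "q \<noteq> 0" "A *v q = l *\<^sub>R q"
    using symmetric_matrix_invariant_subspace_eigenvector[OF sym W inv] by (metis eq_iff_diff_eq_0)
  then have "l \<in> eigenvalues A" "q \<in> eigenspace A l"
    by (auto simp: eigenvalues_def eigenspace_def)
  then have "inner q q = 0" using q(1) by (simp add: W_def)
  then show False using q(2) by simp
qed

section \<open>Matrices acting as scalars on eigenspaces\<close>

definition scalar_on_eigenspaces :: "real^'n::finite^'n \<Rightarrow> real^'n^'n \<Rightarrow> bool" where
  "scalar_on_eigenspaces A X \<longleftrightarrow> (\<forall>l. \<exists>m. \<forall>u\<in>eigenspace A l. X *v u = m *\<^sub>R u)"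

lemma scalar_on_eigenspaces_mat_1: "scalar_on_eigenspaces A (mat 1)"
  unfolding scalar_on_eigenspaces_def by (metis matrix_vector_mul_lid scaleR_one)

lemma scalar_on_eigenspaces_mult:
  assumes "scalar_on_eigenspaces A X"
  shows "scalar_on_eigenspaces A (A ** X)"
  unfolding scalar_on_eigenspaces_def
proof
  fix l
  obtain m where "\<forall>u\<in>eigenspace A l. X *v u = m *\<^sub>R u"
    using assms unfolding scalar_on_eigenspaces_def by blast
  then have "\<forall>u\<in>eigenspace A l. (A ** X) *v u = (m * l) *\<^sub>R u"
    by (simp add: eigenspace_def matrix_vector_mul_assoc[symmetric] matrix_vector_mult_scaleR)
  then show "\<exists>m. \<forall>u\<in>eigenspace A l. (A ** X) *v u = m *\<^sub>R u" by blast
qed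

lemma scalar_on_eigenspaces_add:
  assumes "scalar_on_eigenspaces A X" "scalar_on_eigenspaces A Y"
  shows "scalar_on_eigenspaces A (X + Y)"
  unfolding scalar_on_eigenspaces_def
proof
  fix l
  obtain m m' where "\<forall>u\<in>eigenspace A l. X *v u = m *\<^sub>R u" "\<forall>u\<in>eigenspace A l. Y *v u = m' *\<^sub>R u"
    using assms unfolding scalar_on_eigenspaces_def by meson
  then have "\<forall>u\<in>eigenspace A l. (X + Y) *v u = (m + m') *\<^sub>R u"
    by (simp add: matrix_vector_mult_add_rdistrib scaleR_add_left)
  then show "\<exists>m. \<forall>u\<in>eigenspace A l. (X + Y) *v u = m *\<^sub>R u" by blast
qed

lemma scalar_on_eigenspaces_scaleR:
  assumes "scalar_on_eigenspaces A X"
  shows "scalar_on_eigenspaces A (r *\<^sub>R X)"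
  unfolding scalar_on_eigenspaces_def
proof
  fix l
  obtain m where "\<forall>u\<in>eigenspace A l. X *v u = m *\<^sub>R u"
    using assms unfolding scalar_on_eigenspaces_def by blast
  then have "\<forall>u\<in>eigenspace A l. (r *\<^sub>R X) *v u = (r * m) *\<^sub>R u"
    by (simp add: scaleR_matrix_vector_assoc[symmetric])
  then show "\<exists>m. \<forall>u\<in>eigenspace A l. (r *\<^sub>R X) *v u = m *\<^sub>R u" by blast
qed

lemma scalar_on_eigenspaces_diff:
  assumes "scalar_on_eigenspaces A X" "scalar_on_eigenspaces A Y"
  shows "scalar_on_eigenspaces A (X - Y)"
  using scalar_on_eigenspaces_add[OF assms(1) scalar_on_eigenspaces_scaleR[OF assms(2), of "-1"]]
  by simp

lemma scalar_on_eigenspaces_sum: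
  assumes "\<And>i. i \<in> I \<Longrightarrow> scalar_on_eigenspaces A (X i)"
  shows "scalar_on_eigenspaces A (\<Sum>i\<in>I. X i)"
  using assms
proof (induction I rule: infinite_finite_induct)
  case (insert i I)
  then show ?case by (simp add: scalar_on_eigenspaces_add)
qed (auto simp: scalar_on_eigenspaces_def)

primrec matrix_shift_prod :: "real^'n::finite^'n \<Rightarrow> (nat \<Rightarrow> real) \<Rightarrow> nat \<Rightarrow> real^'n^'n" where
  "matrix_shift_prod A \<theta> 0 = mat 1"
| "matrix_shift_prod A \<theta> (Suc m) = A ** matrix_shift_prod A \<theta> m - \<theta> m *\<^sub>R matrix_shift_prod A \<theta> m"

lemma matrix_shift_prod_eigenvector:
  assumes "u \<in> eigenspace A l"
  shows "matrix_shift_prod A \<theta> m *v u = (\<Prod>j<m. l - \<theta> j) *\<^sub>R u"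
proof (induction m)
  case (Suc m)
  have "matrix_shift_prod A \<theta> (Suc m) *v u
      = A *v (matrix_shift_prod A \<theta> m *v u) - \<theta> m *\<^sub>R (matrix_shift_prod A \<theta> m *v u)"
    by (simp add: matrix_vector_mult_diff_rdistrib matrix_vector_mul_assoc scaleR_matrix_vector_assoc)
  also have "\<dots> = (\<Prod>j<Suc m. l - \<theta> j) *\<^sub>R u"
    using assms by (simp add: Suc.IH eigenspace_def matrix_vector_mult_scaleR algebra_simps)
  finally show ?case .
qed simp

lemma min_idem_mult:
  fixes A :: "real^'n::finite^'n"
  shows "min_idem A l *v v = closest_point (eigenspace A l) v"
  unfolding min_idem_def
  by (simp add: matrix_works linear_closest_point_subspace[OF subspace_eigenspace])

section \<open>Hadamard squares of Gram matrices\<close>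

definition row_product :: "real^'n::finite^'n \<Rightarrow> 'n \<Rightarrow> 'n \<Rightarrow> real^'n" where
  "row_product X p q = (\<chi> i. X $ p $ i * X $ q $ i)"

lemma inner_matrix_vector_sum:
  fixes X :: "real^'n::finite^'n"
  shows "inner w (X *v w) = (\<Sum>i\<in>UNIV. \<Sum>j\<in>UNIV. X $ i $ j * (w $ i * w $ j))"
  by (simp add: inner_vec_def matrix_vector_mult_def sum_distrib_left mult_ac)

lemma hadamard_self_gram:
  fixes E :: "real^'n::finite^'n"
  assumes gram: "transpose E ** E = E"
  shows "hadamard E E $ i $ j = (\<Sum>p\<in>UNIV. \<Sum>q\<in>UNIV. row_product E p q $ i * row_product E p q $ j)"
proof -
  have "E $ i $ j = (\<Sum>p\<in>UNIV. E $ p $ i * E $ p $ j)"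
    by (subst gram[symmetric]) (simp add: matrix_matrix_mult_def transpose_def)
  then have "hadamard E E $ i $ j
      = (\<Sum>p\<in>UNIV. E $ p $ i * E $ p $ j) * (\<Sum>q\<in>UNIV. E $ q $ i * E $ q $ j)"
    by (simp add: hadamard_def)
  also have "\<dots> = (\<Sum>p\<in>UNIV. \<Sum>q\<in>UNIV. row_product E p q $ i * row_product E p q $ j)"
    by (simp add: sum_product row_product_def mult_ac)
  finally show ?thesis .
qed

lemma sum_swap_pairs:
  "(\<Sum>i\<in>I. \<Sum>j\<in>J. \<Sum>p\<in>P. \<Sum>q\<in>Q. f i j p q) = (\<Sum>p\<in>P. \<Sum>q\<in>Q. \<Sum>i\<in>I. \<Sum>j\<in>J. f i j p q)"
proof -
  have "(\<Sum>i\<in>I. \<Sum>j\<in>J. \<Sum>p\<in>P. \<Sum>q\<in>Q. f i j p q) = (\<Sum>i\<in>I. \<Sum>p\<in>P. \<Sum>q\<in>Q. \<Sum>j\<in>J. f i j p q)"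
    by (intro sum.cong refl) (subst sum.swap, intro sum.cong refl sum.swap)
  also have "\<dots> = (\<Sum>p\<in>P. \<Sum>i\<in>I. \<Sum>q\<in>Q. \<Sum>j\<in>J. f i j p q)" by (rule sum.swap)
  also have "\<dots> = (\<Sum>p\<in>P. \<Sum>q\<in>Q. \<Sum>i\<in>I. \<Sum>j\<in>J. f i j p q)" by (intro sum.cong refl sum.swap)
  finally show ?thesis .
qed

lemma inner_hadamard_self_gram:
  fixes E X :: "real^'n::finite^'n"
  assumes "transpose E ** E = E"
  shows "inner X (hadamard E E) = (\<Sum>p\<in>UNIV. \<Sum>q\<in>UNIV. inner (row_product E p q) (X *v row_product E p q))"
proof -
  have "inner X (hadamard E E)
      = (\<Sum>i\<in>UNIV. \<Sum>j\<in>UNIV. \<Sum>p\<in>UNIV. \<Sum>q\<in>UNIV. X $ i $ j * (row_product E p q $ i * row_product E p q $ j))"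
    by (simp add: inner_vec_def hadamard_self_gram[OF assms] sum_distrib_left)
  also have "\<dots> = (\<Sum>p\<in>UNIV. \<Sum>q\<in>UNIV. \<Sum>i\<in>UNIV. \<Sum>j\<in>UNIV. X $ i $ j * (row_product E p q $ i * row_product E p q $ j))"
    by (rule sum_swap_pairs)
  finally show ?thesis by (simp add: inner_matrix_vector_sum)
qed

lemma hadamard_self_gram_mult:
  fixes E :: "real^'n::finite^'n"
  assumes "transpose E ** E = E"
  shows "hadamard E E *v v = (\<Sum>p\<in>UNIV. \<Sum>q\<in>UNIV. inner (row_product E p q) v *\<^sub>R row_product E p q)"
proof -
  have "(hadamard E E *v v) $ i = (\<Sum>p\<in>UNIV. \<Sum>q\<in>UNIV. inner (row_product E p q) v * row_product E p q $ i)" for i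
  proof -
    have "(hadamard E E *v v) $ i
        = (\<Sum>j\<in>UNIV. \<Sum>p\<in>UNIV. \<Sum>q\<in>UNIV. row_product E p q $ i * row_product E p q $ j * v $ j)"
      by (simp add: matrix_vector_mult_def hadamard_self_gram[OF assms] sum_distrib_right)
    also have "\<dots> = (\<Sum>p\<in>UNIV. \<Sum>q\<in>UNIV. \<Sum>j\<in>UNIV. row_product E p q $ i * row_product E p q $ j * v $ j)"
      by (subst sum.swap, subst (2) sum.swap) simp
    finally show ?thesis by (simp add: inner_vec_def sum_distrib_left sum_distrib_right mult_ac)
  qed
  then show ?thesis by (simp add: vec_eq_iff)
qed

section \<open>Distance-regular graphs\<close>

locale distance_regular_graph =
  fixes G :: "'n::finite \<Rightarrow> 'n \<Rightarrow> bool" and D :: nat and b c :: "nat \<Rightarrow> nat"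
  assumes distance_regular: "distance_regular G D b c"
begin

abbreviation "d \<equiv> gdist G"
abbreviation "N x \<equiv> {z. G x z}"
abbreviation "k \<equiv> real (b 0)"
abbreviation "A \<equiv> adj_matrix G"

lemma adj_sym: "G x y \<Longrightarrow> G y x"
  and adj_irrefl: "\<not> G x x"
  using distance_regular by (auto simp: distance_regular_def simple_graph_def)

lemma walk_exists: "\<exists>m. walk G m x y"
  using distance_regular by (simp add: distance_regular_def connected_graph_def)

lemma walk_append: "walk G m x y \<Longrightarrow> walk G n y z \<Longrightarrow> walk G (m + n) x z"
  by (induction m arbitrary: x) auto

lemma walk_rev: "walk G m x y \<Longrightarrow> walk G m y x"
proof (induction m arbitrary: x)
  case (Suc m)
  then obtain z where "G x z" "walk G m z y" by auto
  with Suc.IH walk_append[of m y z 1 x] show ?case by (auto intro: adj_sym)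
qed simp

lemma walk_dist: "walk G (d x y) x y"
  unfolding gdist_def using walk_exists by (rule LeastI_ex)

lemma dist_le_walk: "walk G m x y \<Longrightarrow> d x y \<le> m"
  unfolding gdist_def by (rule Least_le)

lemma dist_commute: "d x y = d y x"
proof -
  have le: "d x y \<le> d y x" for x y by (rule dist_le_walk[OF walk_rev[OF walk_dist]])
  show ?thesis using le[of x y] le[of y x] by (rule antisym)
qed

lemma dist_eq_0_iff [simp]: "d x y = 0 \<longleftrightarrow> x = y"
  using walk_dist[of x y] dist_le_walk[of 0 x y] by auto

lemma dist_self [simp]: "d x x = 0"
  by simp

lemma dist_eq_1_iff: "d x y = 1 \<longleftrightarrow> G x y"
proof
  assume "d x y = 1"
  then show "G x y" using walk_dist[of x y] by simp
next
  assume "G x y"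
  then have "d x y \<le> 1" using dist_le_walk[of 1 x y] by simp
  moreover have "d x y \<noteq> 0" using \<open>G x y\<close> adj_irrefl by auto
  ultimately show "d x y = 1" by linarith
qed

lemma dist_adj_le: "G x z \<Longrightarrow> d y z \<le> d y x + 1"
  using walk_append[OF walk_dist[of y x], of 1 z] dist_le_walk by simp

lemma dist_le_diameter: "d x y \<le> D"
  using distance_regular by (simp add: distance_regular_def diameter_is_def)

lemma dist_predecessor: "d x y = Suc m \<Longrightarrow> \<exists>z. G y z \<and> d x z = m"
proof -
  assume xy: "d x y = Suc m"
  then obtain z where z: "G y z" "walk G m z x"
    using walk_rev[OF walk_dist[of x y]] by auto
  have "d x z \<le> m" using dist_le_walk[OF walk_rev[OF z(2)]] .
  moreover have "d x y \<le> d x z + 1" using dist_adj_le[OF adj_sym[OF z(1)]] .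
  ultimately show ?thesis using xy z(1) by auto
qed

lemma dist_attained: "m \<le> D \<Longrightarrow> \<exists>x y. d x y = m"
proof (induction "D - m" arbitrary: m)
  case 0
  then show ?case
    using distance_regular by (auto simp: distance_regular_def diameter_is_def)
next
  case (Suc i)
  have "i = D - Suc m" "Suc m \<le> D" using Suc.hyps(2) by arith+
  then obtain x y where "d x y = Suc m" using Suc.hyps(1) by blast
  then show ?case using dist_predecessor by blast
qed

lemma card_c: "d x y = i \<Longrightarrow> card {z. G y z \<and> d x z + 1 = i} = c i"
  and card_b: "d x y = i \<Longrightarrow> card {z. G y z \<and> d x z = i + 1} = b i"
proof -
  have "\<forall>i \<le> D. \<forall>x y. d x y = i \<longrightarrow>
      card {z. G y z \<and> d x z + 1 = i} = c i \<and> card {z. G y z \<and> d x z = i + 1} = b i"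
    using distance_regular by (simp add: distance_regular_def)
  then show "d x y = i \<Longrightarrow> card {z. G y z \<and> d x z + 1 = i} = c i"
    and "d x y = i \<Longrightarrow> card {z. G y z \<and> d x z = i + 1} = b i"
    using dist_le_diameter[of x y] by blast+
qed

lemma card_neighbours: "card (N x) = b 0"
  using card_b[of x x 0] dist_eq_1_iff by simp

lemma c_0: "c 0 = 0"
  using card_c[of x x 0] by simp

lemma c_pos: "1 \<le> j \<Longrightarrow> j \<le> D \<Longrightarrow> 1 \<le> c j"
proof -
  assume j: "1 \<le> j" "j \<le> D"
  then obtain x y where xy: "d x y = j" using dist_attained by blast
  obtain m where m: "j = Suc m" using j(1) by (cases j) auto
  obtain z where "G y z" "d x z = m" using dist_predecessor[of x y m] xy m by auto
  then have "{z. G y z \<and> d x z + 1 = j} \<noteq> {}" using m by auto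
  then have "0 < card {z. G y z \<and> d x z + 1 = j}" by (simp add: card_gt_0_iff)
  then show ?thesis using card_c[OF xy] by linarith
qed

lemma c_1: "1 \<le> D \<Longrightarrow> c 1 = 1"
proof -
  assume "1 \<le> D"
  then obtain x y where xy: "d x y = 1" using dist_attained by blast
  have "G y x" using xy dist_eq_1_iff adj_sym by blast
  then have "{z. G y z \<and> d x z + 1 = 1} = {x}" by auto
  then show ?thesis using card_c[OF xy] by simp
qed

lemma b_1_pos: "2 \<le> D \<Longrightarrow> 1 \<le> b 1"
proof -
  assume "2 \<le> D"
  then obtain x y where xy: "d x y = 2" using dist_attained by blast
  then obtain z where z: "G y z" "d x z = 1" using dist_predecessor[of x y 1] by auto
  then have "y \<in> {w. G z w \<and> d x w = 1 + 1}" using xy adj_sym by simp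
  then have "0 < card {w. G z w \<and> d x w = 1 + 1}" by (auto simp: card_gt_0_iff)
  then show ?thesis using card_b[OF z(2)] by linarith
qed

lemma c_plus_b_le: "j \<le> D \<Longrightarrow> c j + b j \<le> b 0"
proof -
  assume "j \<le> D"
  then obtain x y where xy: "d y x = j" using dist_attained by blast
  have "c j + b j = card ({z. G x z \<and> d y z + 1 = j} \<union> {z. G x z \<and> d y z = j + 1})"
    using card_c[OF xy] card_b[OF xy] by (subst card_Un_disjoint) auto
  also have "\<dots> \<le> card (N x)" by (rule card_mono) auto
  finally show ?thesis using card_neighbours by simp
qed

lemma valency_pos: "1 \<le> D \<Longrightarrow> 0 < b 0"
  using c_plus_b_le[of 1] c_1 by simp

lemma sum_neighbours_dist:
  "(\<Sum>z\<in>N x. g (d z y)) = real (c (d x y)) * g (d x y - 1)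
     + (k - real (b (d x y)) - real (c (d x y))) * g (d x y) + real (b (d x y)) * g (d x y + 1)"
proof -
  define j where "j = d y x"
  define S1 where "S1 = {z. G x z \<and> d y z + 1 = j}"
  define S2 where "S2 = {z. G x z \<and> d y z = j}"
  define S3 where "S3 = {z. G x z \<and> d y z = j + 1}"
  have "d y z + 1 = j \<or> d y z = j \<or> d y z = j + 1" if "G x z" for z
    using dist_adj_le[OF that, of y] dist_adj_le[OF adj_sym[OF that], of y] by (auto simp: j_def)
  then have N: "N x = S1 \<union> S2 \<union> S3" by (auto simp: S1_def S2_def S3_def)
  have disj: "S1 \<inter> S2 = {}" "(S1 \<union> S2) \<inter> S3 = {}" by (auto simp: S1_def S2_def S3_def)
  have "card (N x) = card S1 + card S2 + card S3"
    unfolding N by (simp add: card_Un_disjoint disj)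
  then have card: "card S1 = c j" "card S3 = b j" "card S1 + card S2 + card S3 = b 0"
    using card_c card_b card_neighbours[of x] by (simp_all add: S1_def S3_def j_def)
  have const: "(\<Sum>z\<in>S. g (d y z)) = real (card S) * g i" if "\<And>z. z \<in> S \<Longrightarrow> d y z = i" for S i
  proof -
    have "(\<Sum>z\<in>S. g (d y z)) = (\<Sum>z\<in>S. g i)" using that by (intro sum.cong) auto
    then show ?thesis by simp
  qed
  have "(\<Sum>z\<in>N x. g (d y z)) = (\<Sum>z\<in>S1. g (d y z)) + (\<Sum>z\<in>S2. g (d y z)) + (\<Sum>z\<in>S3. g (d y z))"
    unfolding N by (simp add: sum.union_disjoint disj)
  also have "\<dots> = real (card S1) * g (j - 1) + real (card S2) * g j + real (card S3) * g (j + 1)"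
    using const[of S1 "j - 1"] const[of S2 j] const[of S3 "j + 1"]
    by (force simp: S1_def S2_def S3_def)
  also have "real (card S2) = k - real (b j) - real (c j)"
  proof -
    have "real (card S1) + real (card S2) + real (card S3) = k"
      by (simp only: of_nat_add[symmetric] card(3))
    then show ?thesis using card(1,2) by linarith
  qed
  finally show ?thesis
    using card by (simp add: dist_commute[of y] j_def)
qed

definition dist_fun_matrix :: "(nat \<Rightarrow> real) \<Rightarrow> real^'n^'n" where
  "dist_fun_matrix f = (\<chi> x y. f (d x y))"

definition distance_matrix :: "nat \<Rightarrow> real^'n^'n" where
  "distance_matrix i = dist_fun_matrix (\<lambda>j. if j = i then 1 else 0)"

text \<open>The intersection matrix (tridiagonal with entries \<open>c\<^sub>j, a\<^sub>j, b\<^sub>j\<close>) acting on sequences.\<close>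

definition intersection_map :: "(nat \<Rightarrow> real) \<Rightarrow> nat \<Rightarrow> real" where
  "intersection_map f j = real (c j) * f (j - 1) + (k - real (b j) - real (c j)) * f j + real (b j) * f (j + 1)"

lemma dist_fun_matrix_entry [simp]: "dist_fun_matrix f $ x $ y = f (d x y)"
  by (simp add: dist_fun_matrix_def)

lemma dist_fun_matrix_eqD: "dist_fun_matrix f = dist_fun_matrix g \<Longrightarrow> i \<le> D \<Longrightarrow> f i = g i"
  using dist_attained by (metis dist_fun_matrix_entry)

lemma dist_fun_matrix_add: "dist_fun_matrix f + dist_fun_matrix g = dist_fun_matrix (\<lambda>j. f j + g j)"
  and dist_fun_matrix_diff: "dist_fun_matrix f - dist_fun_matrix g = dist_fun_matrix (\<lambda>j. f j - g j)"
  and scaleR_dist_fun_matrix: "r *\<^sub>R dist_fun_matrix f = dist_fun_matrix (\<lambda>j. r * f j)"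
  by (simp_all add: vec_eq_iff)

lemma mat_1_eq_dist_fun_matrix: "mat 1 = dist_fun_matrix (\<lambda>j. if j = 0 then 1 else 0)"
  by (simp add: vec_eq_iff mat_def)

lemma adj_matrix_eq_distance_matrix: "A = distance_matrix 1"
  unfolding vec_eq_iff distance_matrix_def adj_matrix_def using dist_eq_1_iff by auto

lemma adj_matrix_mult_entry: "(A ** X) $ x $ y = (\<Sum>z\<in>N x. X $ z $ y)"
proof -
  have "(A ** X) $ x $ y = (\<Sum>z\<in>UNIV. if G x z then X $ z $ y else 0)"
    by (simp add: matrix_matrix_mult_def adj_matrix_def) (intro sum.cong; simp)
  then show ?thesis by (simp add: sum.inter_filter[symmetric])
qed

lemma adj_matrix_mult_dist_fun_matrix: "A ** dist_fun_matrix f = dist_fun_matrix (intersection_map f)"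
  by (simp add: vec_eq_iff adj_matrix_mult_entry sum_neighbours_dist intersection_map_def)

lemma intersection_map_0: "intersection_map f 0 = k * f 1"
  by (simp add: intersection_map_def c_0)

lemma dist_fun_matrix_eq_sum: "dist_fun_matrix f = (\<Sum>i\<le>D. f i *\<^sub>R distance_matrix i)"
proof -
  have "(\<Sum>i\<le>D. f i * (if d x y = i then 1 else 0)) = f (d x y)" for x y
    using dist_le_diameter[of x y] by (simp add: if_distrib cong: if_cong)
  then show ?thesis by (simp add: vec_eq_iff distance_matrix_def)
qed

lemma distance_matrix_beyond_diameter: "D < i \<Longrightarrow> distance_matrix i = 0"
proof -
  assume "D < i"
  then have "d x y \<noteq> i" for x y using dist_le_diameter[of x y] by linarith
  then show ?thesis by (simp add: vec_eq_iff distance_matrix_def)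
qed

lemma adj_matrix_mult_distance_matrix:
  assumes "1 \<le> i"
  shows "A ** distance_matrix i = real (b (i - 1)) *\<^sub>R distance_matrix (i - 1)
    + (k - real (b i) - real (c i)) *\<^sub>R distance_matrix i + real (c (i + 1)) *\<^sub>R distance_matrix (i + 1)"
  unfolding distance_matrix_def adj_matrix_mult_dist_fun_matrix scaleR_dist_fun_matrix dist_fun_matrix_add
  using assms by (intro arg_cong[where f = dist_fun_matrix] ext) (auto simp: intersection_map_def)

lemma scalar_on_eigenspaces_distance_matrix: "scalar_on_eigenspaces A (distance_matrix i)"
proof -
  have "scalar_on_eigenspaces A (distance_matrix i) \<and> scalar_on_eigenspaces A (distance_matrix (Suc i))"
  proof (induction i)
    case 0
    have "distance_matrix 0 = mat 1"
      by (simp add: distance_matrix_def mat_1_eq_dist_fun_matrix)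
    moreover have "distance_matrix (Suc 0) = A ** mat 1"
      using adj_matrix_eq_distance_matrix by simp
    ultimately show ?case
      using scalar_on_eigenspaces_mult[OF scalar_on_eigenspaces_mat_1, of A]
      by (simp add: scalar_on_eigenspaces_mat_1)
  next
    case (Suc i)
    let ?c = "real (c (Suc (Suc i)))"
    have "scalar_on_eigenspaces A (distance_matrix (Suc (Suc i)))"
    proof (cases "Suc (Suc i) \<le> D")
      case True
      then have "?c \<noteq> 0" using c_pos[of "Suc (Suc i)"] by simp
      have "?c *\<^sub>R distance_matrix (Suc (Suc i)) = A ** distance_matrix (Suc i)
          - real (b i) *\<^sub>R distance_matrix i
          - (k - real (b (Suc i)) - real (c (Suc i))) *\<^sub>R distance_matrix (Suc i)"
        using adj_matrix_mult_distance_matrix[of "Suc i"] by (simp add: algebra_simps)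
      then have "scalar_on_eigenspaces A (?c *\<^sub>R distance_matrix (Suc (Suc i)))"
        using Suc.IH
        by (simp add: scalar_on_eigenspaces_diff scalar_on_eigenspaces_scaleR scalar_on_eigenspaces_mult)
      from scalar_on_eigenspaces_scaleR[OF this, of "1 / ?c"] show ?thesis
        using \<open>?c \<noteq> 0\<close> by simp
    next
      case False
      then show ?thesis
        using distance_matrix_beyond_diameter scalar_on_eigenspaces_scaleR[OF scalar_on_eigenspaces_mat_1, of A 0]
        by simp
    qed
    then show ?case using Suc.IH by simp
  qed
  then show ?thesis by blast
qed

lemma scalar_on_eigenspaces_dist_fun_matrix: "scalar_on_eigenspaces A (dist_fun_matrix f)"
  unfolding dist_fun_matrix_eq_sum
  by (intro scalar_on_eigenspaces_sum scalar_on_eigenspaces_scaleR scalar_on_eigenspaces_distance_matrix)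

lemma matrix_shift_prod_dist_fun_matrix: "\<exists>f. matrix_shift_prod A \<theta> m = dist_fun_matrix f"
proof (induction m)
  case 0
  show ?case using mat_1_eq_dist_fun_matrix by auto
next
  case (Suc m)
  then show ?case
    by (auto simp: adj_matrix_mult_dist_fun_matrix scaleR_dist_fun_matrix dist_fun_matrix_diff)
qed

lemma adj_matrix_mult_vec: "(A *v v) $ x = (\<Sum>z\<in>N x. v $ z)"
proof -
  have "(A *v v) $ x = (\<Sum>z\<in>UNIV. if G x z then v $ z else 0)"
    by (simp add: matrix_vector_mult_def adj_matrix_def) (intro sum.cong; simp)
  then show ?thesis by (simp add: sum.inter_filter[symmetric])
qed

lemma adj_matrix_symmetric: "transpose A = A"
  by (auto simp: vec_eq_iff transpose_def adj_matrix_def intro: adj_sym)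

lemma adj_matrix_mult_ones: "A *v vec 1 = k *\<^sub>R vec 1"
  by (simp add: vec_eq_iff adj_matrix_mult_vec card_neighbours)

lemma eigenvalue_le_valency:
  assumes "l \<in> eigenvalues A"
  shows "l \<le> k"
proof -
  obtain v where v: "v \<noteq> 0" "A *v v = l *\<^sub>R v" using assms unfolding eigenvalues_def by blast
  have "Max (range (\<lambda>y. \<bar>v $ y\<bar>)) \<in> range (\<lambda>y. \<bar>v $ y\<bar>)" by (rule Max_in) auto
  then obtain x where x: "\<bar>v $ x\<bar> = Max (range (\<lambda>y. \<bar>v $ y\<bar>))" by (metis imageE)
  have le: "\<bar>v $ y\<bar> \<le> \<bar>v $ x\<bar>" for y unfolding x by simp
  have "\<bar>v $ x\<bar> > 0"
  proof (rule ccontr)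
    assume "\<not> \<bar>v $ x\<bar> > 0"
    then have "v $ y = 0" for y using le[of y] by simp
    then show False using v(1) by (simp add: vec_eq_iff)
  qed
  moreover have "\<bar>l\<bar> * \<bar>v $ x\<bar> \<le> k * \<bar>v $ x\<bar>"
  proof -
    have "\<bar>l\<bar> * \<bar>v $ x\<bar> = \<bar>\<Sum>z\<in>N x. v $ z\<bar>"
      using arg_cong[OF v(2), of "\<lambda>w. \<bar>w $ x\<bar>"] by (simp add: adj_matrix_mult_vec abs_mult)
    also have "\<dots> \<le> (\<Sum>z\<in>N x. \<bar>v $ x\<bar>)" by (rule order_trans[OF sum_abs sum_mono[OF le]])
    also have "\<dots> = k * \<bar>v $ x\<bar>" by (simp add: card_neighbours)
    finally show ?thesis .
  qed
  ultimately show ?thesis by simp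
qed

end

lemma transpose_min_idem_mult_self:
  fixes A :: "real^'n::finite^'n"
  shows "transpose (min_idem A l) ** min_idem A l = min_idem A l"
proof -
  let ?P = "closest_point (eigenspace A l)"
  have entry: "min_idem A l $ i $ j = ?P (axis j 1) $ i" for i j
    by (simp add: min_idem_def matrix_def)
  have "(transpose (min_idem A l) ** min_idem A l) $ i $ j = inner (?P (axis i 1)) (?P (axis j 1))" for i j
    by (simp add: matrix_matrix_mult_def transpose_def entry inner_vec_def)
  also have "inner (?P (axis i 1)) (?P (axis j 1)) = min_idem A l $ i $ j" for i j
    by (simp add: inner_closest_point_subspace[OF subspace_eigenspace, symmetric] inner_axis' entry)
  finally show ?thesis by (simp add: vec_eq_iff)
qed

section \<open>The spectral decomposition of a distance-regular graph\<close>

locale drg_spectrum = distance_regular_graph G D b c for G :: "'n::finite \<Rightarrow> 'n \<Rightarrow> bool" and D b c +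
  fixes \<theta> :: "nat \<Rightarrow> real"
  assumes eigenvalues_eq: "eigenvalues (adj_matrix G) = \<theta> ` {0..D}"
    and theta_decreasing: "\<And>i j. i < j \<Longrightarrow> j \<le> D \<Longrightarrow> \<theta> j < \<theta> i"
    and diameter_ge_2: "2 \<le> D"
begin

abbreviation "E h \<equiv> min_idem A (\<theta> h)"

lemma theta_inj: "inj_on \<theta> {0..D}"
  by (rule inj_onI) (metis atLeastAtMost_iff linorder_neqE_nat theta_decreasing less_irrefl)

lemma min_idem_mult_in_eigenspace: "E h *v v \<in> eigenspace A (\<theta> h)"
  by (simp add: min_idem_mult closest_point_in_subspace[OF subspace_eigenspace])

lemma adj_matrix_mult_min_idem: "A ** E h = \<theta> h *\<^sub>R E h"
  using min_idem_mult_in_eigenspace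
  by (simp add: matrix_eq eigenspace_def matrix_vector_mul_assoc[symmetric] scaleR_matrix_vector_assoc[symmetric])

lemma sum_min_idem_mult: "(\<Sum>h\<in>{0..D}. E h *v v) = v"
proof -
  have "finite (eigenvalues A)" using eigenvalues_eq by simp
  from symmetric_matrix_sum_eigenprojections[OF adj_matrix_symmetric this, of v]
  show ?thesis by (simp add: eigenvalues_eq sum.reindex[OF theta_inj] min_idem_mult)
qed

lemma theta_0: "\<theta> 0 = k"
proof -
  have "vec 1 \<noteq> (0::real^'n)" by (simp add: vec_eq_iff)
  then have "k \<in> eigenvalues A" unfolding eigenvalues_def using adj_matrix_mult_ones by blast
  then obtain i where "i \<le> D" "k = \<theta> i" using eigenvalues_eq by auto
  then have "k \<le> \<theta> 0" using theta_decreasing[of 0 i] by (cases "i = 0") auto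
  moreover have "\<theta> 0 \<le> k" using eigenvalue_le_valency eigenvalues_eq by simp
  ultimately show ?thesis by simp
qed

lemma ones_in_eigenspace_0: "vec 1 \<in> eigenspace A (\<theta> 0)"
  using adj_matrix_mult_ones by (simp add: eigenspace_def theta_0)

lemma min_idem_0_ne_1: "E 1 \<noteq> E 0"
proof -
  have "E 0 *v vec 1 = vec 1"
    unfolding min_idem_mult by (rule closest_point_self[OF ones_in_eigenspace_0])
  moreover have "E 1 *v vec 1 = 0"
  proof -
    have "inner (vec 1) x = 0" if "x \<in> eigenspace A (\<theta> 1)" for x
      using eigenspace_orthogonal[OF adj_matrix_symmetric ones_in_eigenspace_0 that]
        theta_decreasing[of 0 1] diameter_ge_2 by simp
    then show ?thesis unfolding min_idem_mult
      by (intro closest_point_subspace_eqI subspace_eigenspace subspace_0) simp_all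
  qed
  ultimately have "E 1 *v vec 1 \<noteq> E 0 *v vec 1" by (simp add: vec_eq_iff)
  then show ?thesis by auto
qed

lemma matrix_shift_prod_last: "matrix_shift_prod A \<theta> D = (\<Prod>j<D. \<theta> D - \<theta> j) *\<^sub>R E D"
proof -
  have "matrix_shift_prod A \<theta> D *v v = (\<Prod>j<D. \<theta> D - \<theta> j) *\<^sub>R (E D *v v)" for v
  proof -
    have "matrix_shift_prod A \<theta> D *v v = (\<Sum>h\<in>{0..D}. (\<Prod>j<D. \<theta> h - \<theta> j) *\<^sub>R (E h *v v))"
      by (subst (1) sum_min_idem_mult[symmetric])
        (simp add: linear_sum[OF matrix_vector_mul_linear] matrix_shift_prod_eigenvector[OF min_idem_mult_in_eigenspace])
    also have "\<dots> = (\<Sum>h\<in>{D}. (\<Prod>j<D. \<theta> h - \<theta> j) *\<^sub>R (E h *v v))"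
      by (intro sum.mono_neutral_right) (auto intro!: prod_zero)
    finally show ?thesis by simp
  qed
  then show ?thesis by (simp add: matrix_eq scaleR_matrix_vector_assoc[symmetric])
qed

lemma min_idem_last_dist_fun_matrix: "\<exists>f. E D = dist_fun_matrix f"
proof -
  have "\<theta> D \<noteq> \<theta> j" if "j < D" for j using theta_decreasing[OF that] by simp
  then have "(\<Prod>j<D. \<theta> D - \<theta> j) \<noteq> 0" by simp
  then have "E D = (1 / (\<Prod>j<D. \<theta> D - \<theta> j)) *\<^sub>R matrix_shift_prod A \<theta> D"
    by (simp add: matrix_shift_prod_last)
  then show ?thesis
    using matrix_shift_prod_dist_fun_matrix[of \<theta> D] by (auto simp: scaleR_dist_fun_matrix)
qed

definition eD :: "nat \<Rightarrow> real" where
  "eD = (SOME f. E D = dist_fun_matrix f)"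

lemma min_idem_last_eq: "E D = dist_fun_matrix eD"
  unfolding eD_def using min_idem_last_dist_fun_matrix by (rule someI_ex)

lemma eD_recurrence: "i \<le> D \<Longrightarrow> intersection_map eD i = \<theta> D * eD i"
  using adj_matrix_mult_min_idem[of D]
  by (intro dist_fun_matrix_eqD)
    (simp_all add: min_idem_last_eq adj_matrix_mult_dist_fun_matrix scaleR_dist_fun_matrix)

lemma eD_0_pos: "0 < eD 0"
proof -
  have diag: "eD 0 = (\<Sum>l\<in>UNIV. (E D $ l $ x)\<^sup>2)" for x
    using arg_cong[OF transpose_min_idem_mult_self[of A "\<theta> D"], of "\<lambda>X. X $ x $ x"]
    by (simp add: min_idem_last_eq matrix_matrix_mult_def transpose_def power2_eq_square)
  fix x :: 'n
  have "0 \<le> eD 0" using diag[of x] by (simp add: sum_nonneg)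
  moreover have "eD 0 \<noteq> 0"
  proof
    assume "eD 0 = 0"
    then have "E D = 0"
      using diag by (simp add: vec_eq_iff sum_nonneg_eq_0_iff)
    have "\<theta> D \<in> eigenvalues A" using eigenvalues_eq by simp
    then obtain v where "v \<noteq> 0" "A *v v = \<theta> D *\<^sub>R v" unfolding eigenvalues_def by blast
    then have "E D *v v = v"
      by (simp add: min_idem_mult closest_point_self eigenspace_def)
    then show False using \<open>E D = 0\<close> \<open>v \<noteq> 0\<close> by simp
  qed
  ultimately show ?thesis by simp
qed

subsection \<open>The form \<open>S = \<langle>Q, E\<^sub>D \<circ> E\<^sub>D\<rangle>\<close>\<close>

text \<open>\<open>Q = (A - \<theta>\<^sub>1 I)(A - k I)\<close> vanishes on the first two eigenspaces and is positive
  definite on all others, since \<open>\<theta>\<^sub>0 = k\<close> and the remaining eigenvalues lie below \<open>\<theta>\<^sub>1\<close>.\<close>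

definition Q :: "real^'n^'n" where
  "Q = A ** A - (\<theta> 1 + k) *\<^sub>R A + (\<theta> 1 * k) *\<^sub>R mat 1"

lemma Q_mult_eigenvector: "u \<in> eigenspace A l \<Longrightarrow> Q *v u = ((l - \<theta> 1) * (l - k)) *\<^sub>R u"
  by (simp add: Q_def eigenspace_def matrix_vector_mult_add_rdistrib matrix_vector_mult_diff_rdistrib
      matrix_vector_mul_assoc[symmetric] scaleR_matrix_vector_assoc[symmetric]
      matrix_vector_mult_scaleR algebra_simps)

lemma Q_mult_min_idem: "Q ** E h = ((\<theta> h - \<theta> 1) * (\<theta> h - k)) *\<^sub>R E h"
  by (simp add: matrix_eq matrix_vector_mul_assoc[symmetric] scaleR_matrix_vector_assoc[symmetric]
      Q_mult_eigenvector[OF min_idem_mult_in_eigenspace])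

lemma Q_coefficient_nonneg: "h \<le> D \<Longrightarrow> 0 \<le> (\<theta> h - \<theta> 1) * (\<theta> h - k)"
  and Q_coefficient_pos: "2 \<le> h \<Longrightarrow> h \<le> D \<Longrightarrow> 0 < (\<theta> h - \<theta> 1) * (\<theta> h - k)"
proof -
  have "\<theta> 1 < k" using theta_decreasing[of 0 1] diameter_ge_2 theta_0 by simp
  moreover have "\<theta> h < \<theta> 1" if "2 \<le> h" "h \<le> D" using theta_decreasing[of 1 h] that by simp
  ultimately show "2 \<le> h \<Longrightarrow> h \<le> D \<Longrightarrow> 0 < (\<theta> h - \<theta> 1) * (\<theta> h - k)"
    by (simp add: mult_neg_neg)
  then show "h \<le> D \<Longrightarrow> 0 \<le> (\<theta> h - \<theta> 1) * (\<theta> h - k)"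
    using theta_0 by (cases "h \<le> 1") (auto simp: le_Suc_eq less_imp_le)
qed

lemma inner_Q_mult:
  "inner w (Q *v w) = (\<Sum>h\<in>{0..D}. (\<theta> h - \<theta> 1) * (\<theta> h - k) * inner (E h *v w) (E h *v w))"
proof -
  have "Q *v w = (\<Sum>h\<in>{0..D}. ((\<theta> h - \<theta> 1) * (\<theta> h - k)) *\<^sub>R (E h *v w))"
    by (subst (1) sum_min_idem_mult[symmetric])
      (simp add: linear_sum[OF matrix_vector_mul_linear] Q_mult_eigenvector[OF min_idem_mult_in_eigenspace])
  moreover have "inner w (E h *v w) = inner (E h *v w) (E h *v w)" for h
    unfolding min_idem_mult by (rule inner_closest_point_subspace[OF subspace_eigenspace])
  ultimately show ?thesis by (simp add: inner_sum_right)
qed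

lemma Q_term_nonneg: "h \<le> D \<Longrightarrow> 0 \<le> (\<theta> h - \<theta> 1) * (\<theta> h - k) * inner (E h *v w) (E h *v w)"
  using Q_coefficient_nonneg by simp

lemma inner_Q_mult_nonneg: "0 \<le> inner w (Q *v w)"
  unfolding inner_Q_mult by (intro sum_nonneg Q_term_nonneg) simp

lemma Q_mult_dist_fun_matrix:
  "Q ** dist_fun_matrix g = dist_fun_matrix (\<lambda>j. intersection_map (intersection_map g) j
      - (\<theta> 1 + k) * intersection_map g j + \<theta> 1 * k * g j)"
proof -
  have QX: "Q ** X = A ** (A ** X) - (\<theta> 1 + k) *\<^sub>R (A ** X) + (\<theta> 1 * k) *\<^sub>R X" for X
    by (simp add: matrix_eq Q_def matrix_vector_mult_add_rdistrib matrix_vector_mult_diff_rdistrib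
        matrix_vector_mul_assoc[symmetric] scaleR_matrix_vector_assoc[symmetric])
  show ?thesis unfolding QX
    by (simp add: adj_matrix_mult_dist_fun_matrix scaleR_dist_fun_matrix dist_fun_matrix_add
        dist_fun_matrix_diff)
qed

definition M :: "real^'n^'n" where
  "M = hadamard (E D) (E D)"

lemma M_eq: "M = dist_fun_matrix (\<lambda>j. (eD j)\<^sup>2)"
  by (simp add: M_def min_idem_last_eq hadamard_def vec_eq_iff power2_eq_square)

definition S :: real where
  "S = inner Q M"

lemma S_eq_sum_row_products:
  "S = (\<Sum>p\<in>UNIV. \<Sum>q\<in>UNIV. inner (row_product (E D) p q) (Q *v row_product (E D) p q))"
  unfolding S_def M_def by (rule inner_hadamard_self_gram[OF transpose_min_idem_mult_self])

lemma S_nonneg: "0 \<le> S"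
  unfolding S_eq_sum_row_products by (intro sum_nonneg inner_Q_mult_nonneg)

lemma S_eq_trace: "S = (\<Sum>x\<in>UNIV. (Q ** M) $ x $ x)"
  by (simp add: S_def inner_vec_def matrix_matrix_mult_def M_eq dist_commute)

lemma S_eq: "S = real CARD('n) * k *
    (intersection_map (\<lambda>j. (eD j)\<^sup>2) 1 - (\<theta> 1 + k) * (eD 1)\<^sup>2 + \<theta> 1 * (eD 0)\<^sup>2)"
  by (simp add: S_eq_trace M_eq Q_mult_dist_fun_matrix intersection_map_0 algebra_simps)

lemma light_tail_imp_S_eq_0:
  assumes "light_tail_with (E 0) (E D) (E 1)"
  shows "S = 0"
proof -
  obtain a b' where "M = a *\<^sub>R E 0 + b' *\<^sub>R E 1"
    using assms unfolding light_tail_with_def M_def by blast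
  moreover have "Q ** E 0 = 0" "Q ** E 1 = 0"
    using Q_mult_min_idem[of 0] Q_mult_min_idem[of 1] theta_0 by simp_all
  ultimately have "Q ** M = 0"
    by (simp add: matrix_add_ldistrib matrix_scalar_ac scalar_matrix_assoc[symmetric])
  then show ?thesis by (simp add: S_eq_trace)
qed

lemma S_eq_0_imp_min_idem_row_product:
  assumes S: "S = 0" and h: "2 \<le> h" "h \<le> D"
  shows "E h *v row_product (E D) p q = 0"
proof -
  let ?w = "\<lambda>p q. row_product (E D) p q"
  have "(\<theta> h - \<theta> 1) * (\<theta> h - k) * inner (E h *v ?w p q) (E h *v ?w p q) \<le> inner (?w p q) (Q *v ?w p q)"
    unfolding inner_Q_mult using h
    by (intro member_le_sum Q_term_nonneg) auto
  also have "\<dots> \<le> (\<Sum>q'\<in>UNIV. inner (?w p q') (Q *v ?w p q'))"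
    by (rule member_le_sum) (auto intro: inner_Q_mult_nonneg)
  also have "\<dots> \<le> S"
    unfolding S_eq_sum_row_products by (rule member_le_sum) (auto intro: sum_nonneg inner_Q_mult_nonneg)
  finally have "inner (E h *v ?w p q) (E h *v ?w p q) \<le> 0"
    using S mult_le_cancel_left_pos[OF Q_coefficient_pos[OF h], of _ 0] by simp
  then show ?thesis by (metis inner_eq_zero_iff inner_ge_zero order_antisym)
qed

lemma S_eq_0_imp_M_eq:
  assumes "S = 0"
  obtains g0 g1 where "M = g0 *\<^sub>R E 0 + g1 *\<^sub>R E 1" and "M *v vec 1 = g0 *\<^sub>R vec 1"
proof -
  have "\<forall>l. \<exists>m. \<forall>u\<in>eigenspace A l. M *v u = m *\<^sub>R u"
    using scalar_on_eigenspaces_dist_fun_matrix unfolding scalar_on_eigenspaces_def M_eq by blast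
  from choice[OF this] obtain g where "\<forall>l. \<forall>u\<in>eigenspace A l. M *v u = g l *\<^sub>R u" by blast
  then have g: "\<And>l u. u \<in> eigenspace A l \<Longrightarrow> M *v u = g l *\<^sub>R u" by blast
  have vanish: "M *v (E h *v v) = 0" if "h \<in> {2..D}" for h v
  proof -
    have "inner (row_product (E D) p q) (E h *v v) = 0" for p q
    proof -
      have "inner (row_product (E D) p q) (E h *v v) = inner (E h *v row_product (E D) p q) (E h *v v)"
        unfolding min_idem_mult by (rule inner_closest_point_subspace[OF subspace_eigenspace])
      also have "E h *v row_product (E D) p q = 0"
        using S_eq_0_imp_min_idem_row_product[OF assms] that by simp
      finally show ?thesis by simp
    qed
    then show ?thesis
      by (simp add: M_def hadamard_self_gram_mult[OF transpose_min_idem_mult_self])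
  qed
  have "M *v v = g (\<theta> 0) *\<^sub>R (E 0 *v v) + g (\<theta> 1) *\<^sub>R (E 1 *v v)" for v
  proof -
    have "M *v v = (\<Sum>h\<in>{0..D}. M *v (E h *v v))"
      by (subst (1) sum_min_idem_mult[symmetric]) (simp add: linear_sum[OF matrix_vector_mul_linear])
    also have "\<dots> = M *v (E 0 *v v) + M *v (E 1 *v v) + (\<Sum>h\<in>{2..D}. M *v (E h *v v))"
      using diameter_ge_2 by (simp add: sum.atLeast_Suc_atMost numeral_2_eq_2)
    also have "(\<Sum>h\<in>{2..D}. M *v (E h *v v)) = 0" by (intro sum.neutral ballI vanish)
    also have "M *v (E 0 *v v) + M *v (E 1 *v v) + 0 = g (\<theta> 0) *\<^sub>R (E 0 *v v) + g (\<theta> 1) *\<^sub>R (E 1 *v v)"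
      by (simp add: g[OF min_idem_mult_in_eigenspace])
    finally show ?thesis .
  qed
  then have "M = g (\<theta> 0) *\<^sub>R E 0 + g (\<theta> 1) *\<^sub>R E 1"
    by (simp add: matrix_eq matrix_vector_mult_add_rdistrib scaleR_matrix_vector_assoc[symmetric])
  moreover have "M *v vec 1 = g (\<theta> 0) *\<^sub>R vec 1" by (rule g[OF ones_in_eigenspace_0])
  ultimately show thesis by (rule that)
qed

lemma S_eq_0_imp_light_tail:
  assumes S: "S = 0" and ne: "(eD 1)\<^sup>2 \<noteq> (eD 0)\<^sup>2"
  shows "light_tail_with (E 0) (E D) (E 1)"
proof -
  obtain g0 g1 where M: "M = g0 *\<^sub>R E 0 + g1 *\<^sub>R E 1" and ones: "M *v vec 1 = g0 *\<^sub>R vec 1"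
    using S_eq_0_imp_M_eq[OF S] .
  fix x :: 'n
  have "0 < (eD 0)\<^sup>2" using eD_0_pos by simp
  also have "(eD 0)\<^sup>2 \<le> (\<Sum>y\<in>UNIV. (eD (d x y))\<^sup>2)"
    using member_le_sum[of x UNIV "\<lambda>y. (eD (d x y))\<^sup>2"] by simp
  also have "\<dots> = g0"
    using arg_cong[OF ones, of "\<lambda>v. v $ x"] by (simp add: M_eq matrix_vector_mult_def)
  finally have "g0 \<noteq> 0" by simp
  moreover have "g1 \<noteq> 0"
  proof
    assume "g1 = 0"
    then have "A ** M = k *\<^sub>R M"
      using adj_matrix_mult_min_idem[of 0]
      by (simp add: M theta_0 matrix_scalar_ac scalar_matrix_assoc[symmetric])
    then have "(A ** M) $ x $ x = (k *\<^sub>R M) $ x $ x" by simp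
    then have "k * (eD 1)\<^sup>2 = k * (eD 0)\<^sup>2"
      by (simp add: M_eq adj_matrix_mult_dist_fun_matrix intersection_map_0)
    then show False using ne valency_pos diameter_ge_2 by simp
  qed
  ultimately show ?thesis
    unfolding light_tail_with_def using min_idem_0_ne_1 M by (auto simp: M_def)
qed

subsection \<open>The case \<open>\<theta>\<^sub>D = -k / (a\<^sub>1 + 1)\<close>\<close>

lemma eD_1_eq:
  assumes "\<theta> D * t = - k"
  shows "t * eD 1 = - eD 0"
proof -
  have "k * eD 1 = \<theta> D * eD 0" using eD_recurrence[of 0] by (simp add: intersection_map_0)
  then have "k * (t * eD 1) = (\<theta> D * t) * eD 0" by (metis mult.commute mult.left_commute)
  also have "\<dots> = k * (- eD 0)" using assms by simp
  finally have "k * (t * eD 1) = k * (- eD 0)" .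
  moreover have "k \<noteq> 0" using valency_pos diameter_ge_2 by simp
  ultimately show ?thesis by (metis mult_left_cancel)
qed

lemma eD_2_eq:
  assumes "\<theta> D * t = - k" and "t = k - real (b 1)"
  shows "t\<^sup>2 * eD 2 = eD 0"
proof -
  have rec: "eD 0 + (t - 1) * eD 1 + real (b 1) * eD 2 = \<theta> D * eD 1"
    using eD_recurrence[of 1] diameter_ge_2 c_1 assms(2)
    by (simp add: intersection_map_def numeral_2_eq_2)
  have "real (b 1) * (t\<^sup>2 * eD 2) = real (b 1) * eD 0"
    using rec assms eD_1_eq[OF assms(1)] by algebra
  then show ?thesis using b_1_pos diameter_ge_2 by simp
qed

lemma S_eq_tail:
  assumes "\<theta> D * t = - k" and "t = k - real (b 1)"
  shows "t ^ 4 * S = real CARD('n) * k * (eD 0)\<^sup>2 * (t\<^sup>2 - 1) * (\<theta> 1 * t\<^sup>2 - (k - t * (t + 1)))"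
proof -
  let ?F = "eD 0" and ?u1 = "eD 1" and ?u2 = "eD 2"
  have "real (b 1) = k - t" using assms(2) by simp
  then have im: "intersection_map (\<lambda>j. (eD j)\<^sup>2) 1 = ?F\<^sup>2 + (t - 1) * ?u1\<^sup>2 + (k - t) * ?u2\<^sup>2"
    using c_1 diameter_ge_2 by (simp add: intersection_map_def numeral_2_eq_2)
  have "t ^ 4 * S = real CARD('n) * k *
      (t ^ 4 * (intersection_map (\<lambda>j. (eD j)\<^sup>2) 1 - (\<theta> 1 + k) * ?u1\<^sup>2 + \<theta> 1 * ?F\<^sup>2))"
    unfolding S_eq by (simp only: mult_ac)
  also have "t ^ 4 * (intersection_map (\<lambda>j. (eD j)\<^sup>2) 1 - (\<theta> 1 + k) * ?u1\<^sup>2 + \<theta> 1 * ?F\<^sup>2)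
      = t ^ 4 * ?F\<^sup>2 + (t - 1) * t\<^sup>2 * (t * ?u1)\<^sup>2 + (k - t) * (t\<^sup>2 * ?u2)\<^sup>2
        - (\<theta> 1 + k) * t\<^sup>2 * (t * ?u1)\<^sup>2 + \<theta> 1 * t ^ 4 * ?F\<^sup>2"
    unfolding im by algebra
  also have "\<dots> = ?F\<^sup>2 * (t\<^sup>2 - 1) * (\<theta> 1 * t\<^sup>2 - (k - t * (t + 1)))"
    unfolding eD_1_eq[OF assms(1)] eD_2_eq[OF assms] by algebra
  finally show ?thesis by (simp only: mult_ac)
qed

theorem theta_1_bound_light_tail:
  assumes a1: "a1 = k - real (b 1) - real (c 1)" "a1 \<noteq> 0" and theta_D: "\<theta> D = - k / (a1 + 1)"
  shows "\<theta> 1 \<ge> (k - (a1 + 1) * (a1 + 2)) / (a1 + 1)\<^sup>2 \<and>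
    (\<theta> 1 = (k - (a1 + 1) * (a1 + 2)) / (a1 + 1)\<^sup>2 \<longleftrightarrow> light_tail_with (E 0) (E D) (E 1))"
proof -
  define t where "t = a1 + 1"
  have "0 \<le> a1" using a1(1) c_plus_b_le[of 1] diameter_ge_2 by simp
  then have t1: "1 < t" using a1(2) by (simp add: t_def)
  have t_eq: "t = k - real (b 1)" using a1(1) c_1 diameter_ge_2 by (simp add: t_def)
  have theta_D_t: "\<theta> D * t = - k" using theta_D t1 by (simp add: t_def field_simps)
  define Z where "Z = \<theta> 1 * t\<^sup>2 - (k - t * (t + 1))"
  define C where "C = real CARD('n) * k * (eD 0)\<^sup>2 * (t\<^sup>2 - 1)"
  have C: "0 < C"
    using valency_pos diameter_ge_2 eD_0_pos t1 by (simp add: C_def power_less_one_iff)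
  have S: "t ^ 4 * S = C * Z"
    unfolding Z_def C_def by (rule S_eq_tail[OF theta_D_t t_eq])
  have "0 \<le> C * Z" using S_nonneg t1 by (simp flip: S)
  then have "0 \<le> Z" using C by (simp add: zero_le_mult_iff)
  moreover have "t ^ 4 \<noteq> 0" using t1 by simp
  then have "S = 0 \<longleftrightarrow> Z = 0" using S C by (metis mult_eq_0_iff less_irrefl)
  moreover have "(eD 1)\<^sup>2 < (eD 0)\<^sup>2"
  proof -
    have "(eD 0)\<^sup>2 = t\<^sup>2 * (eD 1)\<^sup>2" using eD_1_eq[OF theta_D_t] by (metis power2_minus power_mult_distrib)
    moreover have "eD 1 \<noteq> 0" using eD_1_eq[OF theta_D_t] eD_0_pos by auto
    ultimately show ?thesis using t1 by simp
  qed
  then have "(eD 1)\<^sup>2 \<noteq> (eD 0)\<^sup>2" by simp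
  then have "S = 0 \<longleftrightarrow> light_tail_with (E 0) (E D) (E 1)"
    using light_tail_imp_S_eq_0 S_eq_0_imp_light_tail by blast
  moreover have "(k - (a1 + 1) * (a1 + 2)) / (a1 + 1)\<^sup>2 = \<theta> 1 - Z / t\<^sup>2"
    using t1 by (simp add: Z_def t_def field_simps)
  ultimately show ?thesis using t1 by (simp add: divide_nonneg_pos)
qed

end

theorem lemma3p1:
  fixes E :: "'n::finite \<Rightarrow> 'n \<Rightarrow> bool"
    and D :: nat and b c :: "nat \<Rightarrow> nat" and \<theta> :: "nat \<Rightarrow> real"
  defines "k \<equiv> real (b 0)"
    and "a1 \<equiv> real (b 0) - real (b 1) - real (c 1)"
    and "Ei \<equiv> (\<lambda>i. min_idem (adj_matrix E) (\<theta> i))"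
  assumes drg: "distance_regular E D b c"
    and k3: "b 0 \<ge> 3"
    and D2: "D \<ge> 2"
    and a1nz: "a1 \<noteq> 0"
    and eigs: "eigenvalues (adj_matrix E) = \<theta> ` {0..D}"
    and decr: "\<And>i j. i < j \<Longrightarrow> j \<le> D \<Longrightarrow> \<theta> i > \<theta> j"
    and thD: "\<theta> D = - k / (a1 + 1)"
  shows "\<theta> 1 \<ge> (k - (a1 + 1) * (a1 + 2)) / (a1 + 1)^2 \<and>
         (\<theta> 1 = (k - (a1 + 1) * (a1 + 2)) / (a1 + 1)^2 \<longleftrightarrow>
            light_tail_with (Ei 0) (Ei D) (Ei 1))"
proof -
  interpret drg_spectrum E D b c \<theta>
    by unfold_locales (use drg eigs decr D2 in auto)
  show ?thesis
    unfolding k_def Ei_def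
    using theta_1_bound_light_tail[OF a1_def[THEN meta_eq_to_obj_eq] a1nz thD[unfolded k_def]] .
qed

end
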